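(* Let $\mathfrak F=(X,\parallel,Y,S_\vee)$ be a frame satisfying (F0)–(F4). Then for every family $(A_j)_{j\in J}$ of stable sets, $\big(\bigvee_{j\in J}A_j\big)^*=\bigcap_{j\in J}A_j^*$. Consequently $(\mathcal G(X),\subseteq,\bigcap,\bigvee,\emptyset,X,(\cdot)^* )$ is a complete lattice with a minimal quasi-complementation operator (an antitone operation satisfying $\emptyset^*=X$ and $(A\vee C)^*=A^*\cap C^*$).
   Context: Polarity $(X,\parallel,Y)$, ${\parallel}\subseteq X\times Y$, $I$ its complement. $U'=\{y:\forall x\in U\;x\parallel y\}$ for $U\subseteq X$, $V'=\{x:\forall y\in V\;x\parallel y\}$ for $V\subseteq Y$; stable sets $A=A''\subseteq X$ form the complete lattice $\mathcal G(X)$ (meets = intersections, joins $\bigvee_jA_j=(\bigcup_jA_j)''$); co-stable sets $B=B''\subseteq Y$ form $\mathcal G(Y)$. $x\preceq z$ iff $\{x\}'\subseteq\{z\}'$, similarly on $Y$; separated means these are partial orders; $\Gamma u$ is the up-set of $u$; closed elements are the sets $\Gamma u$. Frame $(X,\parallel,Y,S_\vee)$ with $S_\vee\subseteq Y\times X$; $S_\vee x=\{y:yS_\vee x\}$, $yS_\vee=\{x:yS_\vee x\}$; $zS'_\vee x$ iff $\forall y(yS_\vee x\Rightarrow z\parallel y)$. Axioms: (F0) $\forall x\exists y\,xIy$ and $\forall y\exists x\,xIy$; (F1) separated; (F2) each $S_\vee x$ is a closed element of $\mathcal G(Y)$; (F3) each $yS_\vee$ is a down-set; (F4) for each $x$,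 $\{z:zS'_\vee x\}\in\mathcal G(X)$ and for each $z$, $\{x:zS'_\vee x\}\in\mathcal G(X)$. $x\perp z$ iff $xS'_\vee z$; $A^*=\{x:\forall z\in A\;x\perp z\}$. *)

theory Defs
  imports Main
begin

text \<open>A polarity (X, par, Y) with explicit carriers X, Y; par is a relation
  (only its restriction to X \<times> Y matters).\<close>

definition lpol :: "'y set \<Rightarrow> ('x \<Rightarrow> 'y \<Rightarrow> bool) \<Rightarrow> 'x set \<Rightarrow> 'y set" where
  "lpol Y par U = {y \<in> Y. \<forall>x\<in>U. par x y}"

definition rpol :: "'x set \<Rightarrow> ('x \<Rightarrow> 'y \<Rightarrow> bool) \<Rightarrow> 'y set \<Rightarrow> 'x set" where
  "rpol X par V = {x \<in> X. \<forall>y\<in>V. par x y}"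

definition stable :: "'x set \<Rightarrow> 'y set \<Rightarrow> ('x \<Rightarrow> 'y \<Rightarrow> bool) \<Rightarrow> 'x set \<Rightarrow> bool" where
  "stable X Y par A \<longleftrightarrow> A \<subseteq> X \<and> rpol X par (lpol Y par A) = A"

definition costable :: "'x set \<Rightarrow> 'y set \<Rightarrow> ('x \<Rightarrow> 'y \<Rightarrow> bool) \<Rightarrow> 'y set \<Rightarrow> bool" where
  "costable X Y par B \<longleftrightarrow> B \<subseteq> Y \<and> lpol Y par (rpol X par B) = B"

definition sjoin :: "'x set \<Rightarrow> 'y set \<Rightarrow> ('x \<Rightarrow> 'y \<Rightarrow> bool) \<Rightarrow> 'i set \<Rightarrow> ('i \<Rightarrow> 'x set) \<Rightarrow> 'x set" where
  "sjoin X Y par J A = rpol X par (lpol Y par (\<Union>j\<in>J. A j))"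

definition leX :: "'y set \<Rightarrow> ('x \<Rightarrow> 'y \<Rightarrow> bool) \<Rightarrow> 'x \<Rightarrow> 'x \<Rightarrow> bool" where
  "leX Y par x z \<longleftrightarrow> lpol Y par {x} \<subseteq> lpol Y par {z}"

definition leY :: "'x set \<Rightarrow> ('x \<Rightarrow> 'y \<Rightarrow> bool) \<Rightarrow> 'y \<Rightarrow> 'y \<Rightarrow> bool" where
  "leY X par y v \<longleftrightarrow> rpol X par {y} \<subseteq> rpol X par {v}"

definition separated :: "'x set \<Rightarrow> 'y set \<Rightarrow> ('x \<Rightarrow> 'y \<Rightarrow> bool) \<Rightarrow> bool" where
  "separated X Y par \<longleftrightarrow>
     (\<forall>x\<in>X. \<forall>z\<in>X. leX Y par x z \<and> leX Y par z x \<longrightarrow> x = z) \<and>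
     (\<forall>y\<in>Y. \<forall>v\<in>Y. leY X par y v \<and> leY X par v y \<longrightarrow> y = v)"

definition GammaY :: "'x set \<Rightarrow> 'y set \<Rightarrow> ('x \<Rightarrow> 'y \<Rightarrow> bool) \<Rightarrow> 'y \<Rightarrow> 'y set" where
  "GammaY X Y par u = {v \<in> Y. leY X par u v}"

definition Sprime :: "'y set \<Rightarrow> ('x \<Rightarrow> 'y \<Rightarrow> bool) \<Rightarrow> ('y \<Rightarrow> 'x \<Rightarrow> bool) \<Rightarrow> 'x \<Rightarrow> 'x \<Rightarrow> bool" where
  "Sprime Y par S z x \<longleftrightarrow> (\<forall>y\<in>Y. S y x \<longrightarrow> par z y)"

definition frame_axioms :: "'x set \<Rightarrow> 'y set \<Rightarrow> ('x \<Rightarrow> 'y \<Rightarrow> bool) \<Rightarrow> ('y \<Rightarrow> 'x \<Rightarrow> bool) \<Rightarrow> bool" where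
  "frame_axioms X Y par S \<longleftrightarrow>
     \<comment> \<open>S is a relation contained in Y \<times> X\<close>
     (\<forall>y x. S y x \<longrightarrow> y \<in> Y \<and> x \<in> X) \<and>
     \<comment> \<open>(F0)\<close>
     (\<forall>x\<in>X. \<exists>y\<in>Y. \<not> par x y) \<and> (\<forall>y\<in>Y. \<exists>x\<in>X. \<not> par x y) \<and>
     \<comment> \<open>(F1)\<close>
     separated X Y par \<and>
     \<comment> \<open>(F2)\<close>
     (\<forall>x\<in>X. \<exists>u\<in>Y. {y \<in> Y. S y x} = GammaY X Y par u) \<and>
     \<comment> \<open>(F3)\<close>
     (\<forall>y\<in>Y. \<forall>x\<in>X. \<forall>z\<in>X. S y x \<and> leX Y par z x \<longrightarrow> S y z) \<and>
     \<comment> \<open>(F4)\<close>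
     (\<forall>x\<in>X. stable X Y par {z \<in> X. Sprime Y par S z x}) \<and>
     (\<forall>z\<in>X. stable X Y par {x \<in> X. Sprime Y par S z x})"

definition perp :: "'y set \<Rightarrow> ('x \<Rightarrow> 'y \<Rightarrow> bool) \<Rightarrow> ('y \<Rightarrow> 'x \<Rightarrow> bool) \<Rightarrow> 'x \<Rightarrow> 'x \<Rightarrow> bool" where
  "perp Y par S x z \<longleftrightarrow> Sprime Y par S x z"

definition star :: "'x set \<Rightarrow> 'y set \<Rightarrow> ('x \<Rightarrow> 'y \<Rightarrow> bool) \<Rightarrow> ('y \<Rightarrow> 'x \<Rightarrow> bool) \<Rightarrow> 'x set \<Rightarrow> 'x set" where
  "star X Y par S A = {x \<in> X. \<forall>z\<in>A. perp Y par S x z}"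

end

theory Submission
  imports Defs
begin

text \<open>For fixed x the set \<open>{z \<in> X. x S'\<^sub>\<or> z}\<close> is stable by (F4), so it contains the
  join of any family exactly when it contains every member; since \<open>x \<in> A\<^sup>*\<close> means
  \<open>A \<subseteq> {z \<in> X. x S'\<^sub>\<or> z}\<close>, this is the identity \<open>(\<Or>\<^sub>j A\<^sub>j)\<^sup>* = \<Inter>\<^sub>j A\<^sub>j\<^sup>*\<close>. Dually, \<open>A\<^sup>*\<close> is
  the intersection of the stable sets \<open>{x \<in> X. x S'\<^sub>\<or> z}\<close>, \<open>z \<in> A\<close>, hence stable.\<close>

lemma rpol_lpol_mono: "U \<subseteq> V \<Longrightarrow> rpol X par (lpol Y par U) \<subseteq> rpol X par (lpol Y par V)"
  unfolding rpol_def lpol_def by blast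

lemma rpol_lpol_upper: "U \<subseteq> X \<Longrightarrow> U \<subseteq> rpol X par (lpol Y par U)"
  unfolding rpol_def lpol_def by blast

lemma rpol_subset: "rpol X par V \<subseteq> X"
  unfolding rpol_def by blast

lemma stable_subset: "stable X Y par A \<Longrightarrow> A \<subseteq> X"
  unfolding stable_def by blast

lemma stable_rpol_lpol: "stable X Y par (rpol X par (lpol Y par U))"
proof -
  have "rpol X par (lpol Y par (rpol X par (lpol Y par U))) = rpol X par (lpol Y par U)"
    unfolding rpol_def lpol_def by blast
  then show ?thesis
    unfolding stable_def by (simp add: rpol_subset)
qed

lemma rpol_lpol_least:
  assumes "stable X Y par K" and "U \<subseteq> K"
  shows "rpol X par (lpol Y par U) \<subseteq> K"
  using assms rpol_lpol_mono unfolding stable_def by metis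

lemma stable_carrier: "stable X Y par X"
  unfolding stable_def using rpol_lpol_upper[of X X par Y] rpol_subset[of X par] by blast

lemma stable_empty:
  assumes "\<forall>x\<in>X. \<exists>y\<in>Y. \<not> par x y"
  shows "stable X Y par {}"
proof -
  have "rpol X par (lpol Y par {}) = {}"
    using assms unfolding rpol_def lpol_def by blast
  then show ?thesis
    unfolding stable_def by simp
qed

lemma stable_Inter:
  assumes "\<forall>i\<in>I. stable X Y par (B i)"
  shows "stable X Y par (X \<inter> (\<Inter>i\<in>I. B i))"
proof -
  have "rpol X par (lpol Y par (X \<inter> (\<Inter>i\<in>I. B i))) \<subseteq> B i" if "i \<in> I" for i
    using rpol_lpol_least[of X Y par "B i"] assms that by blast
  moreover have "X \<inter> (\<Inter>i\<in>I. B i) \<subseteq> rpol X par (lpol Y par (X \<inter> (\<Inter>i\<in>I. B i)))"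
    by (rule rpol_lpol_upper) blast
  ultimately show ?thesis
    unfolding stable_def using rpol_subset[of X par] by blast
qed

lemma stable_sjoin: "stable X Y par (sjoin X Y par J A)"
  unfolding sjoin_def by (rule stable_rpol_lpol)

lemma sjoin_upper:
  assumes "\<forall>j\<in>J. A j \<subseteq> X" and "j \<in> J"
  shows "A j \<subseteq> sjoin X Y par J A"
proof -
  have "(\<Union>j\<in>J. A j) \<subseteq> X" using assms(1) by blast
  then have "(\<Union>j\<in>J. A j) \<subseteq> sjoin X Y par J A"
    unfolding sjoin_def by (rule rpol_lpol_upper)
  then show ?thesis using assms(2) by blast
qed

lemma sjoin_least:
  assumes "stable X Y par C" and "\<forall>j\<in>J. A j \<subseteq> C"
  shows "sjoin X Y par J A \<subseteq> C"
  unfolding sjoin_def using assms by (intro rpol_lpol_least) auto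

lemma star_empty: "star X Y par S {} = X"
  unfolding star_def by blast

lemma star_antimono: "A \<subseteq> C \<Longrightarrow> star X Y par S C \<subseteq> star X Y par S A"
  unfolding star_def by blast

lemma star_eq_Inter: "star X Y par S A = X \<inter> (\<Inter>z\<in>A. {x \<in> X. Sprime Y par S x z})"
  unfolding star_def perp_def by auto

lemma stable_star:
  assumes "\<forall>z\<in>X. stable X Y par {x \<in> X. Sprime Y par S x z}" and "A \<subseteq> X"
  shows "stable X Y par (star X Y par S A)"
  unfolding star_eq_Inter using assms by (intro stable_Inter) blast

lemma star_sjoin:
  assumes F4: "\<forall>x\<in>X. stable X Y par {z \<in> X. Sprime Y par S x z}"
    and sub: "\<forall>j\<in>J. A j \<subseteq> X"
  shows "star X Y par S (sjoin X Y par J A) = X \<inter> (\<Inter>j\<in>J. star X Y par S (A j))"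
proof
  show "star X Y par S (sjoin X Y par J A) \<subseteq> X \<inter> (\<Inter>j\<in>J. star X Y par S (A j))"
    using star_antimono[OF sjoin_upper[OF sub]] unfolding star_def by blast
next
  show "X \<inter> (\<Inter>j\<in>J. star X Y par S (A j)) \<subseteq> star X Y par S (sjoin X Y par J A)"
  proof
    fix x assume x: "x \<in> X \<inter> (\<Inter>j\<in>J. star X Y par S (A j))"
    let ?K = "{z \<in> X. Sprime Y par S x z}"
    have "\<forall>j\<in>J. A j \<subseteq> ?K"
      using x sub unfolding star_def perp_def by blast
    then have "sjoin X Y par J A \<subseteq> ?K"
      using F4 x by (intro sjoin_least) auto
    then show "x \<in> star X Y par S (sjoin X Y par J A)"
      using x unfolding star_def perp_def by blast
  qed
qed

lemma star_sjoin_pair: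
  assumes "\<forall>x\<in>X. stable X Y par {z \<in> X. Sprime Y par S x z}"
    and "A \<subseteq> X" and "C \<subseteq> X"
  shows "star X Y par S (sjoin X Y par {True, False} (\<lambda>b. if b then A else C))
           = star X Y par S A \<inter> star X Y par S C"
proof -
  have "\<forall>b\<in>{True, False}. (if b then A else C) \<subseteq> X"
    using assms(2,3) by simp
  from star_sjoin[OF assms(1) this] show ?thesis
    unfolding star_def by auto
qed

theorem corollary3p13:
  fixes X :: "'x set" and Y :: "'y set"
    and par :: "'x \<Rightarrow> 'y \<Rightarrow> bool" and S :: "'y \<Rightarrow> 'x \<Rightarrow> bool"
  assumes "frame_axioms X Y par S"
  shows
    \<comment> \<open>main claim: (\<Or>_j A_j)* = \<Inter>_j A_j* (empty meet in G(X) is X)\<close>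
    "(\<forall>(J :: 'i set) (A :: 'i \<Rightarrow> 'x set). (\<forall>j\<in>J. stable X Y par (A j)) \<longrightarrow>
        star X Y par S (sjoin X Y par J A) = X \<inter> (\<Inter>j\<in>J. star X Y par S (A j)))
   \<comment> \<open>G(X) is a complete lattice: meets are intersections, joins are closures of unions\<close>
   \<and> (\<forall>(J :: 'i set) (A :: 'i \<Rightarrow> 'x set). (\<forall>j\<in>J. stable X Y par (A j)) \<longrightarrow>
        stable X Y par (X \<inter> (\<Inter>j\<in>J. A j)) \<and> stable X Y par (sjoin X Y par J A) \<and>
        (\<forall>j\<in>J. A j \<subseteq> sjoin X Y par J A) \<and>
        (\<forall>C. stable X Y par C \<and> (\<forall>j\<in>J. A j \<subseteq> C) \<longrightarrow> sjoin X Y par J A \<subseteq> C))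
   \<comment> \<open>bottom \<emptyset> and top X are stable\<close>
   \<and> stable X Y par {} \<and> stable X Y par X
   \<comment> \<open>(.)* is an operation on G(X)\<close>
   \<and> (\<forall>A. stable X Y par A \<longrightarrow> stable X Y par (star X Y par S A))
   \<comment> \<open>minimal quasi-complementation: antitone, \<emptyset>* = X, (A \<or> C)* = A* \<inter> C*\<close>
   \<and> (\<forall>A C. stable X Y par A \<and> stable X Y par C \<and> A \<subseteq> C \<longrightarrow>
        star X Y par S C \<subseteq> star X Y par S A)
   \<and> star X Y par S {} = X
   \<and> (\<forall>A C. stable X Y par A \<and> stable X Y par C \<longrightarrow>
        star X Y par S (sjoin X Y par {True, False} (\<lambda>b. if b then A else C))
          = star X Y par S A \<inter> star X Y par S C)"
proof -
  have F0: "\<forall>x\<in>X. \<exists>y\<in>Y. \<not> par x y"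
    and F4_left: "\<forall>z\<in>X. stable X Y par {x \<in> X. Sprime Y par S x z}"
    and F4_right: "\<forall>x\<in>X. stable X Y par {z \<in> X. Sprime Y par S x z}"
    using assms unfolding frame_axioms_def by simp_all
  have star_join: "star X Y par S (sjoin X Y par J A) = X \<inter> (\<Inter>j\<in>J. star X Y par S (A j))"
    if "\<forall>j\<in>J. stable X Y par (A j)" for J :: "'i set" and A
    by (rule star_sjoin[OF F4_right]) (use that stable_subset in blast)
  have join_meet: "stable X Y par (X \<inter> (\<Inter>j\<in>J. A j)) \<and> stable X Y par (sjoin X Y par J A) \<and>
      (\<forall>j\<in>J. A j \<subseteq> sjoin X Y par J A) \<and>
      (\<forall>C. stable X Y par C \<and> (\<forall>j\<in>J. A j \<subseteq> C) \<longrightarrow> sjoin X Y par J A \<subseteq> C)"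
    if "\<forall>j\<in>J. stable X Y par (A j)" for J :: "'i set" and A
  proof -
    have "\<forall>j\<in>J. A j \<subseteq> X" using that stable_subset by blast
    then show ?thesis
      using that by (simp add: stable_Inter stable_sjoin sjoin_upper sjoin_least)
  qed
  have star_pair: "star X Y par S (sjoin X Y par {True, False} (\<lambda>b. if b then A else C))
      = star X Y par S A \<inter> star X Y par S C"
    if "stable X Y par A" "stable X Y par C" for A C
    using that by (intro star_sjoin_pair[OF F4_right]) (simp_all add: stable_subset)
  show ?thesis
    using star_join join_meet star_pair
    by (simp add: stable_empty[OF F0] stable_carrier stable_star[OF F4_left] stable_subset
        star_antimono star_empty)
qed

end
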